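(* Let $G=(X,\Sigma,\longrightarrow,X_0)$ and $R=(Z,\Sigma,\longrightarrow,Z_0)$ be automata. If $E_1$ and $E_2$ are $\Sigma_{ucr}$-controllability sets from $G$ to $R$ with $E_1\subseteq E_2$, then $\mathcal{A}(E_1)\|G\sqsubseteq\mathcal{A}(E_2)\|G$.
   Context: An automaton is a 4-tuple $A=(Q,\Sigma,\longrightarrow,Q_0)$ with state set $Q$, finite event set $\Sigma$, ${\longrightarrow}\subseteq Q\times\Sigma\times Q$ and $\emptyset\neq Q_0\subseteq Q$; write $q\xrightarrow{\sigma}q'$ for $(q,\sigma,q')\in{\longrightarrow}$. Events are partitioned into uncontrollable $\Sigma_{uc}$ and controllable $\Sigma_c$; $\Sigma_r\subseteq\Sigma$ is a fixed set of required events. For an automaton $S=(Y,\Sigma,\longrightarrow,Y_0)$, $S\|G=(Y\times X,\Sigma,\longrightarrow,Y_0\times X_0)$ with $(y,x)\xrightarrow{\sigma}(y',x')$ iff $y\xrightarrow{\sigma}y'$ and $x\xrightarrow{\sigma}x'$. For automata $A_1,A_2$ (state sets $Q_1,Q_2$, initial sets $Q_{01},Q_{02}$), $\Phi\subseteq Q_1\times Q_2$ is a simulation if every $q_0\in Q_{01}$ has $p_0\in Q_{02}$ with $(q_0,p_0)\in\Phi$, and for all $(q,p)\in\Phi$, $\sigma\in\Sigma$, $q\xrightarrow{\sigma}q'$ there is $p'$ with $p\xrightarrow{\sigma}p'$, $(q',p')\in\Phi$; $A_1\sqsubseteq A_2$ means one exists. For $W,W'\subseteq X\times Z$: $\mathit{match}_{G,R}(W,\sigma,W')$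 iff for all $(x,z)\in W$ and $x\xrightarrow{\sigma}x'$ there is $z'$ with $z\xrightarrow{\sigma}z'$ and $(x',z')\in W'$. $E\subseteq\wp(X\times Z)$ is a $\Sigma_{ucr}$-controllability set from $G$ to $R$ if: (istate) some $W_0\in E$ satisfies $\forall x_0\in X_0\,\exists z_0\in Z_0\,((x_0,z_0)\in W_0)$; (a) for every $W\in E$, $\sigma\in\Sigma_{uc}$ there is $W'\in E$ with $\mathit{match}_{G,R}(W,\sigma,W')$; (b) for every $W\in E$, $(x,z)\in W$, $\sigma\in\Sigma_r$, $z\xrightarrow{\sigma}z'$, there exist $x'$, $W'\in E$ with $x\xrightarrow{\sigma}x'$, $(x',z')\in W'$, $\mathit{match}_{G,R}(W,\sigma,W')$. For such $E$, $E^*=\bigcup_{\widetilde W\in E}\wp(\widetilde W)$, $\mathrm{Succ}_\sigma(W)=\bigcup_{(x,z)\in W}\{x':x\xrightarrow{\sigma}x'\}\times\{z':z\xrightarrow{\sigma}z'\}$, and $\mathcal{A}(E)=(E^*,\Sigma,\longrightarrow,I_E)$ with $I_E=\{W_0\in E^*:\forall x_0\in X_0\,\exists z_0\in Z_0\,((x_0,z_0)\in W_0)\text{ and }W_0\subseteq X_0\times Z_0\}$ and $W\xrightarrow{\sigma}W'$ iff (i) there exist $(x,z)\in W$, $(x',z')\in W'$ with $x\xrightarrow{\sigma}x'$, $z\xrightarrow{\sigma}z'$; (ii) $\mathit{match}_{G,R}(W,\sigma,W')$; (iii) $W'\subseteq\mathrm{Succ}_\sigma(W)$. *)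

theory Defs
  imports Main
begin

record ('q, 'e) automaton =
  St :: "'q set"
  Ev :: "'e set"
  Tr :: "('q \<times> 'e \<times> 'q) set"
  Init :: "'q set"

definition is_automaton :: "('q, 'e) automaton \<Rightarrow> bool" where
  "is_automaton A \<longleftrightarrow> finite (Ev A) \<and> Tr A \<subseteq> St A \<times> Ev A \<times> St A
     \<and> Init A \<noteq> {} \<and> Init A \<subseteq> St A"

definition sync :: "('y, 'e) automaton \<Rightarrow> ('x, 'e) automaton \<Rightarrow> ('y \<times> 'x, 'e) automaton" where
  "sync S G = \<lparr> St = St S \<times> St G, Ev = Ev G,
     Tr = {((y, x), \<sigma>, (y', x')) | y x \<sigma> y' x'. (y, \<sigma>, y') \<in> Tr S \<and> (x, \<sigma>, x') \<in> Tr G},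
     Init = Init S \<times> Init G \<rparr>"

definition is_simulation :: "('q, 'e) automaton \<Rightarrow> ('p, 'e) automaton \<Rightarrow> ('q \<times> 'p) set \<Rightarrow> bool" where
  "is_simulation A1 A2 \<Phi> \<longleftrightarrow> \<Phi> \<subseteq> St A1 \<times> St A2
     \<and> (\<forall>q0\<in>Init A1. \<exists>p0\<in>Init A2. (q0, p0) \<in> \<Phi>)
     \<and> (\<forall>(q, p)\<in>\<Phi>. \<forall>\<sigma>\<in>Ev A1. \<forall>q'. (q, \<sigma>, q') \<in> Tr A1 \<longrightarrow>
          (\<exists>p'. (p, \<sigma>, p') \<in> Tr A2 \<and> (q', p') \<in> \<Phi>))"

definition simulated_by :: "('q, 'e) automaton \<Rightarrow> ('p, 'e) automaton \<Rightarrow> bool" where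
  "simulated_by A1 A2 \<longleftrightarrow> (\<exists>\<Phi>. is_simulation A1 A2 \<Phi>)"

definition match :: "('x, 'e) automaton \<Rightarrow> ('z, 'e) automaton \<Rightarrow> ('x \<times> 'z) set \<Rightarrow> 'e \<Rightarrow> ('x \<times> 'z) set \<Rightarrow> bool" where
  "match G R W \<sigma> W' \<longleftrightarrow> (\<forall>(x, z)\<in>W. \<forall>x'. (x, \<sigma>, x') \<in> Tr G \<longrightarrow>
      (\<exists>z'. (z, \<sigma>, z') \<in> Tr R \<and> (x', z') \<in> W'))"

text \<open>E is a Sigma_ucr-controllability set from G to R (Sigma_uc: uncontrollable, Sigma_r: required events)\<close>
definition is_ctrl_set :: "('x, 'e) automaton \<Rightarrow> ('z, 'e) automaton \<Rightarrow> 'e set \<Rightarrow> 'e set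
     \<Rightarrow> ('x \<times> 'z) set set \<Rightarrow> bool" where
  "is_ctrl_set G R Sigma_uc Sigma_r E \<longleftrightarrow> E \<subseteq> Pow (St G \<times> St R)
     \<and> (\<exists>W0\<in>E. \<forall>x0\<in>Init G. \<exists>z0\<in>Init R. (x0, z0) \<in> W0)
     \<and> (\<forall>W\<in>E. \<forall>\<sigma>\<in>Sigma_uc. \<exists>W'\<in>E. match G R W \<sigma> W')
     \<and> (\<forall>W\<in>E. \<forall>(x, z)\<in>W. \<forall>\<sigma>\<in>Sigma_r. \<forall>z'. (z, \<sigma>, z') \<in> Tr R \<longrightarrow>
          (\<exists>x' W'. (x, \<sigma>, x') \<in> Tr G \<and> W' \<in> E \<and> (x', z') \<in> W' \<and> match G R W \<sigma> W'))"

definition Estar :: "('x \<times> 'z) set set \<Rightarrow> ('x \<times> 'z) set set" where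
  "Estar E = (\<Union>W\<in>E. Pow W)"

definition Succ :: "('x, 'e) automaton \<Rightarrow> ('z, 'e) automaton \<Rightarrow> 'e \<Rightarrow> ('x \<times> 'z) set \<Rightarrow> ('x \<times> 'z) set" where
  "Succ G R \<sigma> W = (\<Union>(x, z)\<in>W. {x'. (x, \<sigma>, x') \<in> Tr G} \<times> {z'. (z, \<sigma>, z') \<in> Tr R})"

definition autA :: "('x, 'e) automaton \<Rightarrow> ('z, 'e) automaton \<Rightarrow> ('x \<times> 'z) set set
     \<Rightarrow> (('x \<times> 'z) set, 'e) automaton" where
  "autA G R E = \<lparr> St = Estar E, Ev = Ev G,
     Tr = {(W, \<sigma>, W') | W \<sigma> W'. W \<in> Estar E \<and> W' \<in> Estar E \<and> \<sigma> \<in> Ev G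
            \<and> (\<exists>(x, z)\<in>W. \<exists>(x', z')\<in>W'. (x, \<sigma>, x') \<in> Tr G \<and> (z, \<sigma>, z') \<in> Tr R)
            \<and> match G R W \<sigma> W'
            \<and> W' \<subseteq> Succ G R \<sigma> W},
     Init = {W0 \<in> Estar E. (\<forall>x0\<in>Init G. \<exists>z0\<in>Init R. (x0, z0) \<in> W0) \<and> W0 \<subseteq> Init G \<times> Init R} \<rparr>"

end

theory Submission
  imports Defs
begin

text \<open>Since \<open>E\<^sub>1\<^sup>* \<subseteq> E\<^sub>2\<^sup>*\<close> and the transitions and initial states of \<open>\<A>(E)\<close> are cut out
  of \<open>E\<^sup>*\<close> by conditions not depending on \<open>E\<close>, \<open>\<A>(E\<^sub>1)\<close> is a sub-automaton of \<open>\<A>(E\<^sub>2)\<close>.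
  Taking the product with \<open>G\<close> preserves this, and the identity relation is a simulation of
  a sub-automaton in the larger automaton.\<close>

definition well_formed :: "('q, 'e) automaton \<Rightarrow> bool" where
  "well_formed A \<longleftrightarrow> Init A \<subseteq> St A \<and> Tr A \<subseteq> St A \<times> Ev A \<times> St A"

definition subautomaton :: "('q, 'e) automaton \<Rightarrow> ('q, 'e) automaton \<Rightarrow> bool" where
  "subautomaton A B \<longleftrightarrow> St A \<subseteq> St B \<and> Ev A = Ev B \<and> Tr A \<subseteq> Tr B \<and> Init A \<subseteq> Init B"

lemma is_automaton_well_formed: "is_automaton A \<Longrightarrow> well_formed A"
  by (simp add: is_automaton_def well_formed_def)

lemma well_formed_autA: "well_formed (autA G R E)"
  by (auto simp: well_formed_def autA_def)

lemma well_formed_sync: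
  assumes "well_formed S" and "well_formed G"
  shows "well_formed (sync S G)"
  using assms by (fastforce simp: well_formed_def sync_def)

lemma Estar_mono: "E\<^sub>1 \<subseteq> E\<^sub>2 \<Longrightarrow> Estar E\<^sub>1 \<subseteq> Estar E\<^sub>2"
  unfolding Estar_def by blast

lemma subautomaton_autA:
  assumes "E\<^sub>1 \<subseteq> E\<^sub>2"
  shows "subautomaton (autA G R E\<^sub>1) (autA G R E\<^sub>2)"
  using Estar_mono[OF assms] unfolding subautomaton_def autA_def by auto blast+

lemma subautomaton_sync:
  assumes "subautomaton S\<^sub>1 S\<^sub>2"
  shows "subautomaton (sync S\<^sub>1 G) (sync S\<^sub>2 G)"
  using assms by (auto simp: subautomaton_def sync_def)

lemma subautomaton_simulated_by:
  assumes sub: "subautomaton A B" and wf: "well_formed A"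
  shows "simulated_by A B"
proof -
  have init: "Init A \<subseteq> Init B \<inter> St A"
    using sub wf by (auto simp: subautomaton_def well_formed_def)
  have step: "(q, \<sigma>, q') \<in> Tr B \<and> q' \<in> St A" if "(q, \<sigma>, q') \<in> Tr A" for q \<sigma> q'
    using that sub wf by (auto simp: subautomaton_def well_formed_def)
  have "is_simulation A B (Id_on (St A))"
    using sub init step unfolding is_simulation_def subautomaton_def by blast
  then show ?thesis
    unfolding simulated_by_def by blast
qed

theorem lemma7:
  fixes G :: "('x, 'e) automaton" and R :: "('z, 'e) automaton"
    and Sigma_uc Sigma_c Sigma_r :: "'e set" and E1 E2 :: "('x \<times> 'z) set set"
  assumes "is_automaton G" and "is_automaton R" and "Ev R = Ev G"
    and "Sigma_uc \<inter> Sigma_c = {}" and "Sigma_uc \<union> Sigma_c = Ev G" and "Sigma_r \<subseteq> Ev G"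
    and "is_ctrl_set G R Sigma_uc Sigma_r E1" and "is_ctrl_set G R Sigma_uc Sigma_r E2"
    and "E1 \<subseteq> E2"
  shows "simulated_by (sync (autA G R E1) G) (sync (autA G R E2) G)"
proof (rule subautomaton_simulated_by)
  show "subautomaton (sync (autA G R E1) G) (sync (autA G R E2) G)"
    using subautomaton_sync subautomaton_autA \<open>E1 \<subseteq> E2\<close> by blast
  show "well_formed (sync (autA G R E1) G)"
    using well_formed_sync well_formed_autA is_automaton_well_formed \<open>is_automaton G\<close> by blast
qed

end
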